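(* Assume $\pi\in\mathcal P_2(\mathbb R^d)$ and let $0<t_0<t_1<\dots<t_K$. Define, for $t_0\le t_k\le t$, $E_{t_k,t}:=\mathbb E\|u_t(Y_t)-u_{t_k}(Y_{t_k})\|^2$. Then $$\sum_{k=0}^{K-1}\int_{t_k}^{t_{k+1}}E_{t_k,t}\,dt\le d\sigma^2\,C_{\mathrm{disc}}.$$
   Context: $\pi$ is a probability measure on $\mathbb R^d$ with Lebesgue density; $X\sim\pi$, $(B_t)$ a standard $d$-dimensional Brownian motion independent of $X$, $\sigma>0$, $Y_t=tX+\sigma B_t$; for $t>0$, $u_t(y)=\int x\,\mathcal N(y;tx,t\sigma^2I_d)\pi(x)dx/\int\mathcal N(y;tx,t\sigma^2I_d)\pi(x)dx$, so $u_t(Y_t)=\mathbb E[X|Y_t]$. $C_{\mathrm{disc}}:=\sum_{k=1}^{K-1}\max\{0,(t_{k+1}-t_k)-(t_k-t_{k-1})\}\frac{1}{t_k}+\frac{t_1-t_0}{t_0}$. *)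

theory Defs
  imports "HOL-Probability.Probability"
begin

definition gauss_density :: "'a::euclidean_space \<Rightarrow> real \<Rightarrow> 'a \<Rightarrow> real" where
  "gauss_density m v y = (2 * pi * v) powr (- real DIM('a) / 2) * exp (- (norm (y - m))\<^sup>2 / (2 * v))"

definition std_BM_indep_of :: "'w measure \<Rightarrow> ('w \<Rightarrow> 'a::euclidean_space) \<Rightarrow> (real \<Rightarrow> 'w \<Rightarrow> 'a) \<Rightarrow> bool" where
  "std_BM_indep_of M X B \<longleftrightarrow>
     (\<forall>t\<ge>0. B t \<in> borel_measurable M) \<and>
     (\<forall>\<omega>\<in>space M. B 0 \<omega> = 0) \<and>
     (\<forall>\<omega>\<in>space M. continuous_on {0..} (\<lambda>t. B t \<omega>)) \<and>
     (\<forall>s t. 0 \<le> s \<and> s < t \<longrightarrow>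
        distr M borel (\<lambda>\<omega>. B t \<omega> - B s \<omega>) = density lborel (gauss_density 0 (t - s))) \<and>
     (\<forall>(n::nat) (s::nat \<Rightarrow> real). s 0 = 0 \<and> (\<forall>i<n. s i < s (Suc i)) \<longrightarrow>
        prob_space.indep_vars M (\<lambda>_. borel)
          (\<lambda>i \<omega>. if i = 0 then X \<omega> else B (s i) \<omega> - B (s (i - 1)) \<omega>) {0..n})"

definition Yproc :: "('w \<Rightarrow> 'a::euclidean_space) \<Rightarrow> (real \<Rightarrow> 'w \<Rightarrow> 'a) \<Rightarrow> real \<Rightarrow> real \<Rightarrow> 'w \<Rightarrow> 'a" where
  "Yproc X B \<sigma> t \<omega> = t *\<^sub>R X \<omega> + \<sigma> *\<^sub>R B t \<omega>"

text \<open>Posterior mean u_t(y), pi having Lebesgue density f.\<close>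
definition post_mean :: "('a::euclidean_space \<Rightarrow> real) \<Rightarrow> real \<Rightarrow> real \<Rightarrow> 'a \<Rightarrow> 'a" where
  "post_mean f \<sigma> t y =
     (1 / (\<integral>x. gauss_density (t *\<^sub>R x) (t * \<sigma>\<^sup>2) y * f x \<partial>lborel)) *\<^sub>R
     (\<integral>x. (gauss_density (t *\<^sub>R x) (t * \<sigma>\<^sup>2) y * f x) *\<^sub>R x \<partial>lborel)"

definition Eerr :: "'w measure \<Rightarrow> ('w \<Rightarrow> 'a::euclidean_space) \<Rightarrow> (real \<Rightarrow> 'w \<Rightarrow> 'a) \<Rightarrow> ('a \<Rightarrow> real) \<Rightarrow> real \<Rightarrow> real \<Rightarrow> real \<Rightarrow> real" where
  "Eerr M X B f \<sigma> s t =
     (\<integral>\<omega>. (norm (post_mean f \<sigma> t (Yproc X B \<sigma> t \<omega>) - post_mean f \<sigma> s (Yproc X B \<sigma> s \<omega>)))\<^sup>2 \<partial>M)"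

definition C_disc :: "(nat \<Rightarrow> real) \<Rightarrow> nat \<Rightarrow> real" where
  "C_disc tt K = (\<Sum>k\<in>{1..K-1}. max 0 ((tt (k+1) - tt k) - (tt k - tt (k-1))) * (1 / tt k))
                 + (tt 1 - tt 0) / tt 0"

end

theory Submission
  imports Defs
begin

text \<open>Write J(t) = E |X - u_t(Y_t)|^2. The posterior mean u_t(y) is the barycenter of the
  posterior weight of y, so for every estimator c the error E |X - c(Y_t)|^2 exceeds J(t) by
  exactly E |c(Y_t) - u_t(Y_t)|^2; the estimator c(y) = y / t gives J(t) \<le> d sigma^2 / t.
  For s < t the Brownian bridge writes B_s = (s/t) B_t + V with V independent of (X, B_t), so
  u_s(Y_s) = u_s((s/t) Y_t + sigma V), and averaging the previous identity over V gives
  J(s) = J(t) + E_{s,t}. Hence J decreases and E_{t_k,t} \<le> J(t_k) - J(t_(k+1)) on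
  [t_k, t_(k+1)]; summing (t_(k+1) - t_k) (J(t_k) - J(t_(k+1))) by parts against
  J(t_k) \<le> d sigma^2 / t_k produces d sigma^2 C_disc.
  All expectations are written as nonnegative iterated integrals against f and Gaussian
  densities, so integrability only matters when passing back to the Bochner integral E_{s,t}.\<close>

section \<open>Iterated Lebesgue integrals\<close>

lemma nn_integral_lborel_translate:
  fixes c :: "'a::euclidean_space"
  assumes [measurable]: "F \<in> borel_measurable borel"
  shows "(\<integral>\<^sup>+z. F z \<partial>lborel) = (\<integral>\<^sup>+w. F (w + c) \<partial>lborel)"
proof -
  have "(\<integral>\<^sup>+z. F z \<partial>lborel) = (\<integral>\<^sup>+z. F z \<partial>distr lborel borel ((+) c))"
    by (simp add: lborel_distr_plus)
  also have "\<dots> = (\<integral>\<^sup>+w. F (c + w) \<partial>lborel)"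
    by (subst nn_integral_distr) auto
  finally show ?thesis
    by (simp only: add.commute)
qed

lemma nn_integral_lborel_swap:
  fixes a :: "'a::euclidean_space \<Rightarrow> real" and b :: "'b::euclidean_space \<Rightarrow> real"
  assumes [measurable]: "a \<in> borel_measurable borel" "b \<in> borel_measurable borel"
    "(\<lambda>(x, v). F x v) \<in> borel_measurable (borel \<Otimes>\<^sub>M borel)"
  shows "(\<integral>\<^sup>+x. ennreal (a x) * (\<integral>\<^sup>+v. ennreal (b v) * F x v \<partial>lborel) \<partial>lborel)
       = (\<integral>\<^sup>+v. ennreal (b v) * (\<integral>\<^sup>+x. ennreal (a x) * F x v \<partial>lborel) \<partial>lborel)"
proof -
  have "(\<integral>\<^sup>+x. ennreal (a x) * (\<integral>\<^sup>+v. ennreal (b v) * F x v \<partial>lborel) \<partial>lborel)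
      = (\<integral>\<^sup>+x. \<integral>\<^sup>+v. ennreal (b v) * (ennreal (a x) * F x v) \<partial>lborel \<partial>lborel)"
    by (intro nn_integral_cong trans[OF nn_integral_cmult[symmetric]]) (measurable, simp add: mult.left_commute)
  also have "\<dots> = (\<integral>\<^sup>+v. \<integral>\<^sup>+x. ennreal (b v) * (ennreal (a x) * F x v) \<partial>lborel \<partial>lborel)"
    by (rule lborel_pair.Fubini'[symmetric]) measurable
  also have "\<dots> = (\<integral>\<^sup>+v. ennreal (b v) * (\<integral>\<^sup>+x. ennreal (a x) * F x v \<partial>lborel) \<partial>lborel)"
    by (intro nn_integral_cong nn_integral_cmult) measurable
  finally show ?thesis .
qed

lemma nn_integral_lborel_shear:
  fixes K :: "'a::euclidean_space \<times> 'a \<Rightarrow> ennreal"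
  assumes [measurable]: "K \<in> borel_measurable (borel \<Otimes>\<^sub>M borel)"
  shows "(\<integral>\<^sup>+z1. \<integral>\<^sup>+z2. K (z1, z2) \<partial>lborel \<partial>lborel)
       = (\<integral>\<^sup>+w. \<integral>\<^sup>+v. K (v + c *\<^sub>R w, w - (v + c *\<^sub>R w)) \<partial>lborel \<partial>lborel)"
proof -
  have "(\<integral>\<^sup>+z1. \<integral>\<^sup>+z2. K (z1, z2) \<partial>lborel \<partial>lborel) = (\<integral>\<^sup>+z1. \<integral>\<^sup>+w. K (z1, w + - z1) \<partial>lborel \<partial>lborel)"
    by (intro nn_integral_cong nn_integral_lborel_translate) measurable
  also have "\<dots> = (\<integral>\<^sup>+w. \<integral>\<^sup>+z1. K (z1, w - z1) \<partial>lborel \<partial>lborel)"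
    by (simp, rule lborel_pair.Fubini'[symmetric]) measurable
  also have "\<dots> = (\<integral>\<^sup>+w. \<integral>\<^sup>+v. K (v + c *\<^sub>R w, w - (v + c *\<^sub>R w)) \<partial>lborel \<partial>lborel)"
    by (intro nn_integral_cong nn_integral_lborel_translate) measurable
  finally show ?thesis .
qed

lemma interval_integral_le_const:
  fixes F :: "real \<Rightarrow> real"
  assumes "a \<le> b" and "\<And>x. a \<le> x \<Longrightarrow> x \<le> b \<Longrightarrow> F x \<le> C" and "0 \<le> C"
  shows "(LBINT x=a..b. F x) \<le> C * (b - a)"
proof (cases "interval_lebesgue_integrable lborel a b F")
  case True
  have "interval_lebesgue_integrable lborel a b (\<lambda>x. C)"
    by simp
  with True assms have "(LBINT x:{a<..<b}. F x) \<le> (LBINT x:{a<..<b}. C)"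
    by (intro set_integral_mono) (auto simp: interval_lebesgue_integrable_def)
  also have "\<dots> = C * (b - a)"
    using interval_lebesgue_integral_le_eq[of a b lborel "\<lambda>x. C"] assms by simp
  finally show ?thesis
    using assms by (simp add: interval_lebesgue_integral_le_eq)
next
  case False
  then have "(LBINT x=a..b. F x) = 0"
    using assms by (simp add: interval_lebesgue_integral_le_eq interval_lebesgue_integrable_def
        set_lebesgue_integral_def set_integrable_def not_integrable_integral_eq)
  then show ?thesis
    using assms by simp
qed

section \<open>Isotropic Gaussian densities\<close>

lemma gauss_density_nonneg: "0 \<le> gauss_density m v y"
  by (simp add: gauss_density_def)

lemma gauss_density_le:
  "0 < v \<Longrightarrow> gauss_density (m::'a::euclidean_space) v y \<le> (2 * pi * v) powr (- real DIM('a) / 2)"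
  unfolding gauss_density_def by (rule mult_left_le) auto

lemma measurable_gauss_density[measurable (raw)]:
  fixes F G :: "'b \<Rightarrow> 'a::euclidean_space"
  assumes [measurable]: "F \<in> borel_measurable N" "V \<in> borel_measurable N" "G \<in> borel_measurable N"
  shows "(\<lambda>x. gauss_density (F x) (V x) (G x)) \<in> borel_measurable N"
  unfolding gauss_density_def by measurable

lemma norm_sq_eq_sum_Basis: "(norm z)\<^sup>2 = (\<Sum>b\<in>Basis. (z \<bullet> b)\<^sup>2)"
  unfolding power2_norm_eq_inner by (subst euclidean_inner) (simp add: power2_eq_square)

lemma gauss_density_eq_prod_normal_density:
  fixes z :: "'a::euclidean_space"
  assumes v: "0 < v"
  shows "gauss_density 0 v z = (\<Prod>b\<in>Basis. normal_density 0 (sqrt v) (z \<bullet> b))"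
proof -
  have "(\<Prod>b\<in>Basis. normal_density 0 (sqrt v) (z \<bullet> b))
      = (\<Prod>b\<in>Basis. exp (- (z \<bullet> b)\<^sup>2 / (2 * v)) / sqrt (2 * pi * v))"
    using v by (simp add: normal_density_def)
  also have "\<dots> = exp (\<Sum>b\<in>Basis. - (z \<bullet> b)\<^sup>2 / (2 * v)) / sqrt (2 * pi * v) ^ DIM('a)"
    by (simp add: prod_dividef exp_sum)
  also have "(\<Sum>b\<in>Basis. - (z \<bullet> b)\<^sup>2 / (2 * v)) = - (norm z)\<^sup>2 / (2 * v)"
    by (simp add: norm_sq_eq_sum_Basis sum_divide_distrib[symmetric] sum_negf)
  also have "sqrt (2 * pi * v) ^ DIM('a) = (2 * pi * v) powr (real DIM('a) / 2)"
    using v by (simp add: powr_half_sqrt[symmetric] powr_realpow[symmetric] powr_powr)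
  finally show ?thesis using v by (simp add: gauss_density_def powr_minus_divide divide_simps)
qed

lemma nn_integral_gauss_density:
  assumes v: "0 < v"
  shows "(\<integral>\<^sup>+z. ennreal (gauss_density 0 v (z::'a::euclidean_space)) \<partial>lborel) = 1"
proof -
  have "(\<integral>\<^sup>+z. ennreal (gauss_density 0 v (z::'a)) \<partial>lborel)
      = (\<integral>\<^sup>+z. (\<Prod>b\<in>Basis. ennreal (normal_density 0 (sqrt v) ((z::'a) \<bullet> b))) \<partial>lborel)"
    using v by (intro nn_integral_cong) (simp add: gauss_density_eq_prod_normal_density prod_ennreal)
  also have "\<dots> = (\<Prod>b\<in>(Basis::'a set). \<integral>\<^sup>+x. ennreal (normal_density 0 (sqrt v) x) \<partial>lborel)"
    by (rule nn_integral_lborel_prod) auto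
  also have "\<dots> = 1"
    using v by (simp add: nn_integral_eq_integral)
  finally show ?thesis .
qed

lemma nn_integral_gauss_density_component_sq:
  fixes b0 :: "'a::euclidean_space"
  assumes v: "0 < v" and b0: "b0 \<in> Basis"
  shows "(\<integral>\<^sup>+z. ennreal (gauss_density 0 v z * (z \<bullet> b0)\<^sup>2) \<partial>lborel) = ennreal v"
proof -
  define g where "g b x = normal_density 0 (sqrt v) x * (if b = b0 then x\<^sup>2 else 1)" for b :: 'a and x
  have "gauss_density 0 v z * (z \<bullet> b0)\<^sup>2 = (\<Prod>b\<in>Basis. g b (z \<bullet> b))" for z :: 'a
    using v b0 by (simp add: g_def gauss_density_eq_prod_normal_density prod.distrib prod.delta)
  then have "(\<integral>\<^sup>+z. ennreal (gauss_density 0 v z * (z \<bullet> b0)\<^sup>2) \<partial>lborel)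
      = (\<integral>\<^sup>+z. (\<Prod>b\<in>Basis. ennreal (g b (z \<bullet> b))) \<partial>lborel)"
    by (simp add: prod_ennreal g_def)
  also have "\<dots> = (\<Prod>b\<in>Basis. \<integral>\<^sup>+x. ennreal (g b x) \<partial>lborel)"
    by (rule nn_integral_lborel_prod) (auto simp: g_def)
  also have "\<dots> = (\<Prod>b\<in>Basis. if b = b0 then ennreal v else 1)"
  proof (intro prod.cong refl)
    have "has_bochner_integral lborel (\<lambda>x. normal_density 0 (sqrt v) x * x\<^sup>2) v"
      using normal_moment_even[of "sqrt v" 0 1] v by (simp add: numeral_2_eq_2)
    then show "(\<integral>\<^sup>+x. ennreal (g b x) \<partial>lborel) = (if b = b0 then ennreal v else 1)" for b
      using v by (auto simp: g_def nn_integral_eq_integral has_bochner_integral_iff)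
  qed
  also have "\<dots> = ennreal v"
    using b0 by simp
  finally show ?thesis .
qed

lemma nn_integral_gauss_density_norm_sq:
  assumes v: "0 < v"
  shows "(\<integral>\<^sup>+z. ennreal (gauss_density 0 v (z::'a::euclidean_space) * (norm z)\<^sup>2) \<partial>lborel)
     = ennreal (real DIM('a) * v)"
proof -
  have "(\<integral>\<^sup>+z. ennreal (gauss_density 0 v (z::'a) * (norm z)\<^sup>2) \<partial>lborel)
      = (\<integral>\<^sup>+z. (\<Sum>b\<in>Basis. ennreal (gauss_density 0 v (z::'a) * (z \<bullet> b)\<^sup>2)) \<partial>lborel)"
    by (intro nn_integral_cong)
      (simp add: norm_sq_eq_sum_Basis sum_distrib_left sum_ennreal gauss_density_nonneg)
  also have "\<dots> = (\<Sum>b\<in>(Basis::'a set). \<integral>\<^sup>+z. ennreal (gauss_density 0 v z * (z \<bullet> b)\<^sup>2) \<partial>lborel)"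
    by (rule nn_integral_sum) measurable
  also have "\<dots> = (\<Sum>b\<in>(Basis::'a set). ennreal v)"
    using v by (intro sum.cong refl nn_integral_gauss_density_component_sq)
  also have "\<dots> = ennreal (real DIM('a) * v)"
    using v by (simp add: ennreal_of_nat_eq_real_of_nat ennreal_mult)
  finally show ?thesis .
qed

lemma gauss_density_scale:
  fixes m w :: "'a::euclidean_space"
  assumes \<sigma>: "0 < \<sigma>" and t: "0 < t"
  shows "\<sigma> ^ DIM('a) * gauss_density m (t * \<sigma>\<^sup>2) (m + \<sigma> *\<^sub>R w) = gauss_density 0 t w"
proof -
  define e where "e = - real DIM('a) / 2"
  have "(2 * pi * (t * \<sigma>\<^sup>2)) powr e = ((2 * pi * t) * \<sigma> powr 2) powr e"
    using \<sigma> by (simp add: powr_numeral mult.assoc)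
  also have "\<dots> = (2 * pi * t) powr e * (\<sigma> powr 2) powr e"
    using \<sigma> t by (simp add: powr_mult)
  also have "(\<sigma> powr 2) powr e = inverse (\<sigma> ^ DIM('a))"
    using \<sigma> by (simp only: powr_powr) (simp add: e_def powr_minus powr_realpow)
  finally have normalisation: "\<sigma> ^ DIM('a) * (2 * pi * (t * \<sigma>\<^sup>2)) powr e = (2 * pi * t) powr e"
    using \<sigma> by simp
  have exponent: "- (norm (\<sigma> *\<^sub>R w))\<^sup>2 / (2 * (t * \<sigma>\<^sup>2)) = - (norm w)\<^sup>2 / (2 * t)"
    using \<sigma> t by (simp add: power_mult_distrib)
  have "\<sigma> ^ DIM('a) * gauss_density m (t * \<sigma>\<^sup>2) (m + \<sigma> *\<^sub>R w)
      = (\<sigma> ^ DIM('a) * (2 * pi * (t * \<sigma>\<^sup>2)) powr e) * exp (- (norm (\<sigma> *\<^sub>R w))\<^sup>2 / (2 * (t * \<sigma>\<^sup>2)))"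
    unfolding gauss_density_def e_def[symmetric] by (simp only: add_diff_cancel_left' mult.assoc)
  also have "\<dots> = gauss_density 0 t w"
    unfolding normalisation exponent gauss_density_def e_def[symmetric] by simp
  finally show ?thesis .
qed

text \<open>The joint density of (B_s, B_t - B_s), written in the coordinates
  (B_s - (s/t) B_t, B_t): the two factors are the Brownian bridge and the endpoint.\<close>
lemma gauss_density_bridge:
  fixes v w :: "'a::euclidean_space"
  assumes s: "0 < s" and st: "s < t"
  shows "gauss_density 0 s (v + (s/t) *\<^sub>R w) * gauss_density 0 (t - s) (w - (v + (s/t) *\<^sub>R w))
       = gauss_density 0 t w * gauss_density 0 (s * (t - s) / t) v"
proof -
  have t: "0 < t" using s st by linarith
  define d where "d = - real DIM('a) / 2"
  have normalisation: "(2 * pi * s) powr d * (2 * pi * (t - s)) powr d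
      = (2 * pi * t) powr d * (2 * pi * (s * (t - s) / t)) powr d"
  proof -
    have "(2 * pi * s) powr d * (2 * pi * (t - s)) powr d = ((2 * pi * s) * (2 * pi * (t - s))) powr d"
      using s st by (subst powr_mult) auto
    also have "(2 * pi * s) * (2 * pi * (t - s)) = (2 * pi * t) * (2 * pi * (s * (t - s) / t))"
      using t by (simp add: field_simps)
    also have "\<dots> powr d = (2 * pi * t) powr d * (2 * pi * (s * (t - s) / t)) powr d"
      using s st by (subst powr_mult) auto
    finally show ?thesis .
  qed
  have exponent: "- (norm (v + (s/t) *\<^sub>R w))\<^sup>2 / (2 * s) + - (norm (w - (v + (s/t) *\<^sub>R w)))\<^sup>2 / (2 * (t - s))
      = - (norm w)\<^sup>2 / (2 * t) + - (norm v)\<^sup>2 / (2 * (s * (t - s) / t))"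
  proof -
    have norms: "(norm (v + (s/t) *\<^sub>R w))\<^sup>2 = v \<bullet> v + 2 * (s/t) * (v \<bullet> w) + (s/t)\<^sup>2 * (w \<bullet> w)"
      "(norm (w - (v + (s/t) *\<^sub>R w)))\<^sup>2 = v \<bullet> v - 2 * (1 - s/t) * (v \<bullet> w) + (1 - s/t)\<^sup>2 * (w \<bullet> w)"
      "(norm w)\<^sup>2 = w \<bullet> w" "(norm v)\<^sup>2 = v \<bullet> v"
      unfolding power2_norm_eq_inner
      by (simp_all add: inner_add_left inner_add_right inner_diff_left inner_diff_right inner_commute
          power2_eq_square algebra_simps)
    show ?thesis
      unfolding norms using s st t by (simp add: field_simps power2_eq_square)
  qed
  have "gauss_density 0 s (v + (s/t) *\<^sub>R w) * gauss_density 0 (t - s) (w - (v + (s/t) *\<^sub>R w))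
      = ((2 * pi * s) powr d * (2 * pi * (t - s)) powr d) *
        exp (- (norm (v + (s/t) *\<^sub>R w))\<^sup>2 / (2 * s) + - (norm (w - (v + (s/t) *\<^sub>R w)))\<^sup>2 / (2 * (t - s)))"
    unfolding gauss_density_def d_def[symmetric] exp_add by (simp add: mult_ac)
  also have "\<dots> = ((2 * pi * t) powr d * (2 * pi * (s * (t - s) / t)) powr d) *
        exp (- (norm w)\<^sup>2 / (2 * t) + - (norm v)\<^sup>2 / (2 * (s * (t - s) / t)))"
    by (simp only: normalisation exponent)
  also have "\<dots> = gauss_density 0 t w * gauss_density 0 (s * (t - s) / t) v"
    unfolding gauss_density_def d_def[symmetric] exp_add by (simp add: mult_ac)
  finally show ?thesis .
qed

lemma nn_integral_gauss_density_affine: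
  fixes m :: "'a::euclidean_space"
  assumes \<sigma>: "0 < \<sigma>" and t: "0 < t" and [measurable]: "H \<in> borel_measurable borel"
  shows "(\<integral>\<^sup>+w. ennreal (gauss_density 0 t w) * H (m + \<sigma> *\<^sub>R w) \<partial>lborel)
       = (\<integral>\<^sup>+y. ennreal (gauss_density m (t * \<sigma>\<^sup>2) y) * H y \<partial>lborel)"
proof -
  let ?F = "\<lambda>y. ennreal (gauss_density m (t * \<sigma>\<^sup>2) y) * H y"
  have \<sigma>0: "\<sigma> \<noteq> 0" using \<sigma> by simp
  have "(\<integral>\<^sup>+y. ?F y \<partial>lborel)
      = (\<integral>\<^sup>+y. ?F y \<partial>density (distr lborel borel (\<lambda>w. m + \<sigma> *\<^sub>R w)) (\<lambda>_. \<bar>\<sigma>\<bar> ^ DIM('a)))"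
    using lborel_affine[OF \<sigma>0, of m] by (rule arg_cong)
  also have "\<dots> = (\<integral>\<^sup>+y. \<bar>\<sigma>\<bar> ^ DIM('a) * ?F y \<partial>distr lborel borel (\<lambda>w. m + \<sigma> *\<^sub>R w))"
    by (subst nn_integral_density) auto
  also have "\<dots> = (\<integral>\<^sup>+w. \<bar>\<sigma>\<bar> ^ DIM('a) * ?F (m + \<sigma> *\<^sub>R w) \<partial>lborel)"
    by (subst nn_integral_distr) auto
  also have "\<dots> = (\<integral>\<^sup>+w. ennreal (gauss_density 0 t w) * H (m + \<sigma> *\<^sub>R w) \<partial>lborel)"
  proof (rule nn_integral_cong)
    fix w :: 'a
    have "ennreal (\<bar>\<sigma>\<bar> ^ DIM('a)) * ennreal (gauss_density m (t * \<sigma>\<^sup>2) (m + \<sigma> *\<^sub>R w))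
        = ennreal (gauss_density 0 t w)"
      using \<sigma> gauss_density_scale[OF \<sigma> t, of m w] by (simp add: ennreal_mult'[symmetric])
    then show "\<bar>\<sigma>\<bar> ^ DIM('a) * ?F (m + \<sigma> *\<^sub>R w) = ennreal (gauss_density 0 t w) * H (m + \<sigma> *\<^sub>R w)"
      by (simp add: mult.assoc[symmetric] ennreal_power[symmetric])
  qed
  finally show ?thesis ..
qed

lemma nn_integral_gauss_density_bridge:
  fixes G :: "'a::euclidean_space \<times> 'a \<Rightarrow> ennreal"
  assumes s: "0 < s" "s < t" and [measurable]: "G \<in> borel_measurable (borel \<Otimes>\<^sub>M borel)"
  shows "(\<integral>\<^sup>+z1. ennreal (gauss_density 0 s z1) *
            (\<integral>\<^sup>+z2. ennreal (gauss_density 0 (t - s) z2) * G (z1, z2) \<partial>lborel) \<partial>lborel)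
    = (\<integral>\<^sup>+v. ennreal (gauss_density 0 (s * (t - s) / t) v) *
         (\<integral>\<^sup>+w. ennreal (gauss_density 0 t w) * G (v + (s/t) *\<^sub>R w, w - (v + (s/t) *\<^sub>R w)) \<partial>lborel) \<partial>lborel)"
proof -
  let ?r = "s * (t - s) / t" and ?z1 = "\<lambda>v w. v + (s/t) *\<^sub>R w"
  have density: "ennreal (gauss_density 0 s (?z1 v w)) * ennreal (gauss_density 0 (t - s) (w - ?z1 v w))
      = ennreal (gauss_density 0 t w) * ennreal (gauss_density 0 ?r v)" for v w :: 'a
    using gauss_density_bridge[OF s, of v w] by (simp add: ennreal_mult[symmetric] gauss_density_nonneg)
  have kernel_measurable: "(\<lambda>(z1, z2). ennreal (gauss_density 0 s z1) *
      (ennreal (gauss_density 0 (t - s) z2) * G (z1, z2))) \<in> borel_measurable (borel \<Otimes>\<^sub>M borel)"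
    by measurable
  have "(\<integral>\<^sup>+z1. ennreal (gauss_density 0 s z1) *
            (\<integral>\<^sup>+z2. ennreal (gauss_density 0 (t - s) z2) * G (z1, z2) \<partial>lborel) \<partial>lborel)
      = (\<integral>\<^sup>+z1. \<integral>\<^sup>+z2. ennreal (gauss_density 0 s z1) *
            (ennreal (gauss_density 0 (t - s) z2) * G (z1, z2)) \<partial>lborel \<partial>lborel)"
    by (intro nn_integral_cong nn_integral_cmult[symmetric]) measurable
  also have "\<dots> = (\<integral>\<^sup>+w. \<integral>\<^sup>+v. ennreal (gauss_density 0 s (?z1 v w)) *
      (ennreal (gauss_density 0 (t - s) (w - ?z1 v w)) * G (?z1 v w, w - ?z1 v w)) \<partial>lborel \<partial>lborel)"
    using nn_integral_lborel_shear[OF kernel_measurable, of "s / t"] by simp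
  also have "\<dots> = (\<integral>\<^sup>+w. ennreal (gauss_density 0 t w) *
      (\<integral>\<^sup>+v. ennreal (gauss_density 0 ?r v) * G (?z1 v w, w - ?z1 v w) \<partial>lborel) \<partial>lborel)"
    by (simp add: mult.assoc[symmetric] density) (simp add: mult.assoc nn_integral_cmult)
  also have "\<dots> = (\<integral>\<^sup>+v. ennreal (gauss_density 0 ?r v) *
      (\<integral>\<^sup>+w. ennreal (gauss_density 0 t w) * G (?z1 v w, w - ?z1 v w) \<partial>lborel) \<partial>lborel)"
    by (rule nn_integral_lborel_swap) measurable
  finally show ?thesis .
qed

section \<open>Weighted least squares\<close>

context
  fixes W :: "'a::euclidean_space \<Rightarrow> real"
  assumes W_measurable[measurable]: "W \<in> borel_measurable lborel"
    and W_nonneg: "\<And>x. 0 \<le> W x"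
    and W_integrable: "integrable lborel W"
    and W_second_moment: "integrable lborel (\<lambda>x. W x * (norm x)\<^sup>2)"
begin

lemma weighted_integrable_scaleR: "integrable lborel (\<lambda>x. W x *\<^sub>R x)"
proof (rule Bochner_Integration.integrable_bound[OF Bochner_Integration.integrable_add[OF W_integrable W_second_moment]])
  show "AE x in lborel. norm (W x *\<^sub>R x) \<le> norm (W x + W x * (norm x)\<^sup>2)"
  proof (rule AE_I2)
    fix x :: 'a
    have "2 * norm x \<le> 1 + (norm x)\<^sup>2"
      using sum_squares_bound[of 1 "norm x"] by simp
    then have "norm x \<le> 1 + (norm x)\<^sup>2"
      using norm_ge_zero[of x] by linarith
    then have "W x * norm x \<le> W x * (1 + (norm x)\<^sup>2)"
      using W_nonneg[of x] by (rule mult_left_mono)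
    then show "norm (W x *\<^sub>R x) \<le> norm (W x + W x * (norm x)\<^sup>2)"
      using W_nonneg[of x] by (simp add: algebra_simps)
  qed
qed measurable

lemma weighted_sq_dist_expand:
  "W x * (norm (x - c))\<^sup>2 = W x * (norm x)\<^sup>2 - 2 * ((W x *\<^sub>R x) \<bullet> c) + W x * (norm c)\<^sup>2"
  by (simp add: power2_norm_eq_inner inner_diff_left inner_diff_right inner_commute algebra_simps)

lemma weighted_integrable_sq_dist: "integrable lborel (\<lambda>x. W x * (norm (x - c))\<^sup>2)"
  unfolding weighted_sq_dist_expand
  using W_integrable W_second_moment integrable_inner_left[OF weighted_integrable_scaleR] by auto

lemma weighted_integral_sq_dist:
  "(\<integral>x. W x * (norm (x - c))\<^sup>2 \<partial>lborel) =
     (\<integral>x. W x * (norm x)\<^sup>2 \<partial>lborel) - 2 * ((\<integral>x. W x *\<^sub>R x \<partial>lborel) \<bullet> c)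
     + (\<integral>x. W x \<partial>lborel) * (norm c)\<^sup>2"
  unfolding weighted_sq_dist_expand
  using W_integrable W_second_moment weighted_integrable_scaleR
    integrable_inner_left[OF weighted_integrable_scaleR]
  by (simp add: integral_inner_left[symmetric])

text \<open>If the total weight vanishes, then W = 0 almost everywhere and u is the junk value 0
  of the division by zero; the identity still holds.\<close>
lemma weighted_sq_dist_pythagoras:
  defines "u \<equiv> (1 / (\<integral>x. W x \<partial>lborel)) *\<^sub>R (\<integral>x. W x *\<^sub>R x \<partial>lborel)"
  shows "(\<integral>\<^sup>+x. ennreal (W x * (norm (x - c))\<^sup>2) \<partial>lborel) =
         (\<integral>\<^sup>+x. ennreal (W x * (norm (x - u))\<^sup>2) \<partial>lborel) + (\<integral>\<^sup>+x. ennreal (W x * (norm (c - u))\<^sup>2) \<partial>lborel)"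
proof -
  define Z where "Z = (\<integral>x. W x \<partial>lborel)"
  have first_moment: "(\<integral>x. W x *\<^sub>R x \<partial>lborel) = Z *\<^sub>R u"
  proof (cases "Z = 0")
    case True
    then have "AE x in lborel. W x = 0"
      using W_integrable W_nonneg unfolding Z_def by (subst integral_nonneg_eq_0_iff_AE[symmetric]) auto
    then have "(\<integral>x. W x *\<^sub>R x \<partial>lborel) = (\<integral>x. 0 *\<^sub>R x \<partial>lborel)"
      by (intro integral_cong_AE) (auto elim: AE_mp)
    then show ?thesis by (simp add: True)
  qed (simp add: u_def Z_def)
  have nn_integral_eq: "(\<integral>\<^sup>+x. ennreal (W x * (norm (x - c'))\<^sup>2) \<partial>lborel)
      = ennreal (\<integral>x. W x * (norm (x - c'))\<^sup>2 \<partial>lborel)" for c'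
    using weighted_integrable_sq_dist W_nonneg by (intro nn_integral_eq_integral) auto
  have "(\<integral>x. W x * (norm (x - c))\<^sup>2 \<partial>lborel) = (\<integral>x. W x * (norm (x - u))\<^sup>2 \<partial>lborel) + Z * (norm (c - u))\<^sup>2"
    unfolding weighted_integral_sq_dist first_moment Z_def[symmetric]
    by (simp add: power2_norm_eq_inner inner_diff_left inner_diff_right inner_commute algebra_simps)
  moreover have "(\<integral>\<^sup>+x. ennreal (W x * (norm (c - u))\<^sup>2) \<partial>lborel) = ennreal (Z * (norm (c - u))\<^sup>2)"
    unfolding Z_def using W_integrable W_nonneg by (subst nn_integral_eq_integral) auto
  moreover have "0 \<le> Z" "0 \<le> (\<integral>x. W x * (norm (x - u))\<^sup>2 \<partial>lborel)"
    unfolding Z_def using W_nonneg by (auto intro!: integral_nonneg_AE)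
  ultimately show ?thesis
    by (simp add: nn_integral_eq ennreal_plus)
qed

end

section \<open>The Gaussian channel\<close>

locale gaussian_channel =
  fixes f :: "'a::euclidean_space \<Rightarrow> real" and \<sigma> :: real
  assumes f_measurable[measurable]: "f \<in> borel_measurable borel"
    and f_nonneg: "\<And>x. 0 \<le> f x"
    and prob_space_f: "prob_space (density lborel f)"
    and f_second_moment: "integrable (density lborel f) (\<lambda>x. (norm x)\<^sup>2)"
    and \<sigma>_pos: "0 < \<sigma>"
begin

lemma nn_integral_f: "(\<integral>\<^sup>+x. ennreal (f x) \<partial>lborel) = 1"
  using prob_space.emeasure_space_1[OF prob_space_f] by (simp add: emeasure_density)

lemma integrable_f: "integrable lborel f"
  using nn_integral_f f_nonneg by (intro integrableI_nonneg) auto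

lemma integrable_f_norm_sq: "integrable lborel (\<lambda>x. f x * (norm x)\<^sup>2)"
  using f_second_moment f_nonneg by (subst (asm) integrable_density) auto

lemma measurable_post_mean[measurable]: "post_mean f \<sigma> t \<in> borel_measurable borel"
  unfolding post_mean_def by measurable

definition post_weight :: "real \<Rightarrow> 'a \<Rightarrow> 'a \<Rightarrow> real" where
  "post_weight t y x = gauss_density (t *\<^sub>R x) (t * \<sigma>\<^sup>2) y * f x"

lemma measurable_post_weight[measurable (raw)]:
  assumes [measurable]: "F \<in> borel_measurable N" "G \<in> borel_measurable N"
  shows "(\<lambda>\<omega>. post_weight t (F \<omega>) (G \<omega>)) \<in> borel_measurable N"
  unfolding post_weight_def by measurable

lemma post_weight_nonneg: "0 \<le> post_weight t y x"
  unfolding post_weight_def using f_nonneg by (simp add: gauss_density_nonneg)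

lemma integrable_post_weight:
  assumes t: "0 < t"
  shows "integrable lborel (post_weight t y)" "integrable lborel (\<lambda>x. post_weight t y x * (norm x)\<^sup>2)"
proof -
  define C where "C = (2 * pi * (t * \<sigma>\<^sup>2)) powr (- real DIM('a) / 2)"
  have "0 < t * \<sigma>\<^sup>2" using t \<sigma>_pos by simp
  then have "gauss_density (t *\<^sub>R x) (t * \<sigma>\<^sup>2) y \<le> C" for x
    unfolding C_def by (rule gauss_density_le)
  then have bound: "post_weight t y x \<le> C * f x" for x
    unfolding post_weight_def using f_nonneg by (rule mult_right_mono)
  have "0 \<le> C" unfolding C_def by simp
  show "integrable lborel (post_weight t y)"
    using bound post_weight_nonneg \<open>0 \<le> C\<close> f_nonneg
    by (intro Bochner_Integration.integrable_bound[OF integrable_mult_left[OF integrable_f, of C]] AE_I2)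
      (auto simp: abs_mult mult_ac)
  have "post_weight t y x * (norm x)\<^sup>2 \<le> C * (f x * (norm x)\<^sup>2)" for x
    using mult_right_mono[OF bound zero_le_power2] by (simp add: mult.assoc)
  then show "integrable lborel (\<lambda>x. post_weight t y x * (norm x)\<^sup>2)"
    using post_weight_nonneg \<open>0 \<le> C\<close> f_nonneg
    by (intro Bochner_Integration.integrable_bound[OF integrable_mult_left[OF integrable_f_norm_sq, of C]] AE_I2)
      (auto simp: abs_mult mult_ac)
qed

lemma post_mean_eq_barycenter:
  "post_mean f \<sigma> t y = (1 / (\<integral>x. post_weight t y x \<partial>lborel)) *\<^sub>R (\<integral>x. post_weight t y x *\<^sub>R x \<partial>lborel)"
  unfolding post_mean_def post_weight_def ..

text \<open>The expectation of H(X, Y_t) for X with density f and Y_t = t X + sigma B_t.\<close>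
definition expect_obs :: "real \<Rightarrow> ('a \<times> 'a \<Rightarrow> ennreal) \<Rightarrow> ennreal" where
  "expect_obs t H = (\<integral>\<^sup>+x. ennreal (f x) *
     (\<integral>\<^sup>+w. ennreal (gauss_density 0 t w) * H (x, t *\<^sub>R x + \<sigma> *\<^sub>R w) \<partial>lborel) \<partial>lborel)"

lemma expect_obs_eq_post_weight:
  assumes t: "0 < t" and [measurable]: "H \<in> borel_measurable (borel \<Otimes>\<^sub>M borel)"
  shows "expect_obs t H = (\<integral>\<^sup>+y. \<integral>\<^sup>+x. ennreal (post_weight t y x) * H (x, y) \<partial>lborel \<partial>lborel)"
proof -
  have "expect_obs t H = (\<integral>\<^sup>+x. ennreal (f x) *
      (\<integral>\<^sup>+y. ennreal (gauss_density (t *\<^sub>R x) (t * \<sigma>\<^sup>2) y) * H (x, y) \<partial>lborel) \<partial>lborel)"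
    unfolding expect_obs_def
    by (intro nn_integral_cong arg_cong2[where f="(*)"] refl nn_integral_gauss_density_affine \<sigma>_pos t)
      measurable
  also have "\<dots> = (\<integral>\<^sup>+x. \<integral>\<^sup>+y. ennreal (f x) * (ennreal (gauss_density (t *\<^sub>R x) (t * \<sigma>\<^sup>2) y) * H (x, y)) \<partial>lborel \<partial>lborel)"
    by (intro nn_integral_cong nn_integral_cmult[symmetric]) measurable
  also have "\<dots> = (\<integral>\<^sup>+y. \<integral>\<^sup>+x. ennreal (f x) * (ennreal (gauss_density (t *\<^sub>R x) (t * \<sigma>\<^sup>2) y) * H (x, y)) \<partial>lborel \<partial>lborel)"
    by (rule lborel_pair.Fubini'[symmetric]) measurable
  also have "\<dots> = (\<integral>\<^sup>+y. \<integral>\<^sup>+x. ennreal (post_weight t y x) * H (x, y) \<partial>lborel \<partial>lborel)"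
    using f_nonneg by (intro nn_integral_cong) (simp add: post_weight_def ennreal_mult gauss_density_nonneg mult_ac)
  finally show ?thesis .
qed

definition mmse :: "real \<Rightarrow> ennreal" where
  "mmse t = expect_obs t (\<lambda>(x, y). ennreal ((norm (x - post_mean f \<sigma> t y))\<^sup>2))"

lemma expect_obs_sq_error:
  assumes t: "0 < t" and [measurable]: "c \<in> borel_measurable borel"
  shows "expect_obs t (\<lambda>(x, y). ennreal ((norm (x - c y))\<^sup>2))
       = mmse t + expect_obs t (\<lambda>(x, y). ennreal ((norm (c y - post_mean f \<sigma> t y))\<^sup>2))"
proof -
  let ?u = "post_mean f \<sigma> t"
  have "(\<integral>\<^sup>+x. ennreal (post_weight t y x) * ennreal ((norm (x - c y))\<^sup>2) \<partial>lborel)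
     = (\<integral>\<^sup>+x. ennreal (post_weight t y x) * ennreal ((norm (x - ?u y))\<^sup>2) \<partial>lborel)
     + (\<integral>\<^sup>+x. ennreal (post_weight t y x) * ennreal ((norm (c y - ?u y))\<^sup>2) \<partial>lborel)" for y
    using weighted_sq_dist_pythagoras[of "post_weight t y", OF _ post_weight_nonneg integrable_post_weight[OF t], of "c y"]
      post_weight_nonneg
    by (simp add: ennreal_mult post_mean_eq_barycenter)
  then have "(\<integral>\<^sup>+y. \<integral>\<^sup>+x. ennreal (post_weight t y x) * ennreal ((norm (x - c y))\<^sup>2) \<partial>lborel \<partial>lborel)
     = (\<integral>\<^sup>+y. \<integral>\<^sup>+x. ennreal (post_weight t y x) * ennreal ((norm (x - ?u y))\<^sup>2) \<partial>lborel \<partial>lborel)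
     + (\<integral>\<^sup>+y. \<integral>\<^sup>+x. ennreal (post_weight t y x) * ennreal ((norm (c y - ?u y))\<^sup>2) \<partial>lborel \<partial>lborel)"
    by (simp add: nn_integral_add)
  then show ?thesis
    unfolding mmse_def using t by (simp add: expect_obs_eq_post_weight)
qed

lemma mmse_le:
  assumes t: "0 < t"
  shows "mmse t \<le> ennreal (real DIM('a) * \<sigma>\<^sup>2 / t)"
proof -
  have error: "(norm (x - (1 / t) *\<^sub>R (t *\<^sub>R x + \<sigma> *\<^sub>R w)))\<^sup>2 = (\<sigma> / t)\<^sup>2 * (norm w)\<^sup>2" for x w :: 'a
  proof -
    have "x - (1 / t) *\<^sub>R (t *\<^sub>R x + \<sigma> *\<^sub>R w) = - ((\<sigma> / t) *\<^sub>R w)"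
      using t by (simp add: algebra_simps)
    then show ?thesis
      using \<sigma>_pos t by (simp add: power_mult_distrib power_divide)
  qed
  have const: "ennreal ((\<sigma> / t)\<^sup>2) * ennreal (real DIM('a) * t) = ennreal (real DIM('a) * \<sigma>\<^sup>2 / t)"
  proof -
    have "(\<sigma> / t)\<^sup>2 * (real DIM('a) * t) = real DIM('a) * \<sigma>\<^sup>2 / t"
      using t by (simp add: power2_eq_square field_simps)
    then show ?thesis
      by (metis ennreal_mult' zero_le_power2)
  qed
  have "mmse t \<le> expect_obs t (\<lambda>(x, y). ennreal ((norm (x - (1 / t) *\<^sub>R y))\<^sup>2))"
    using expect_obs_sq_error[OF t, of "\<lambda>y. (1 / t) *\<^sub>R y"] by simp
  also have "\<dots> = (\<integral>\<^sup>+x. ennreal (f x) *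
      (\<integral>\<^sup>+w. ennreal ((\<sigma> / t)\<^sup>2) * ennreal (gauss_density 0 t (w::'a) * (norm w)\<^sup>2) \<partial>lborel) \<partial>lborel)"
    unfolding expect_obs_def
    by (simp add: error ennreal_mult[symmetric] gauss_density_nonneg mult_ac)
  also have "\<dots> = (\<integral>\<^sup>+x. ennreal (f x) * ennreal (real DIM('a) * \<sigma>\<^sup>2 / t) \<partial>lborel)"
    by (simp add: nn_integral_cmult nn_integral_gauss_density_norm_sq[OF t] const)
  also have "\<dots> = ennreal (real DIM('a) * \<sigma>\<^sup>2 / t)"
    by (subst nn_integral_multc) (auto simp: nn_integral_f)
  finally show ?thesis .
qed

text \<open>The expectation of H(X, B_s, B_t - B_s).\<close>
definition expect_incr :: "real \<Rightarrow> real \<Rightarrow> ('a \<times> 'a \<times> 'a \<Rightarrow> ennreal) \<Rightarrow> ennreal" where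
  "expect_incr s t H = (\<integral>\<^sup>+x. ennreal (f x) * (\<integral>\<^sup>+z1. ennreal (gauss_density 0 s z1) *
      (\<integral>\<^sup>+z2. ennreal (gauss_density 0 (t - s) z2) * H (x, z1, z2) \<partial>lborel) \<partial>lborel) \<partial>lborel)"

lemma expect_incr_eq_expect_obs:
  assumes "s < t" and [measurable]: "G \<in> borel_measurable (borel \<Otimes>\<^sub>M borel)"
  shows "expect_incr s t (\<lambda>(x, z1, z2). G (x, s *\<^sub>R x + \<sigma> *\<^sub>R z1)) = expect_obs s G"
proof -
  have "0 < t - s" using assms by simp
  then show ?thesis
    unfolding expect_incr_def expect_obs_def
    by (simp add: nn_integral_multc nn_integral_gauss_density)
qed

text \<open>(X, Y_s, Y_t) has the law of (X, (s/t) Y_t + sigma V, Y_t) with V independent of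
  (X, Y_t) and Gaussian of variance s (t - s) / t: this is the Brownian bridge.\<close>
lemma expect_incr_bridge:
  assumes s: "0 < s" "s < t" and [measurable]: "G \<in> borel_measurable (borel \<Otimes>\<^sub>M borel \<Otimes>\<^sub>M borel)"
  shows "expect_incr s t (\<lambda>(x, z1, z2). G (x, s *\<^sub>R x + \<sigma> *\<^sub>R z1, t *\<^sub>R x + \<sigma> *\<^sub>R (z1 + z2)))
       = (\<integral>\<^sup>+v. ennreal (gauss_density 0 (s * (t - s) / t) v) *
            expect_obs t (\<lambda>(x, y). G (x, (s / t) *\<^sub>R y + \<sigma> *\<^sub>R v, y)) \<partial>lborel)"
proof -
  let ?r = "s * (t - s) / t"
  let ?G = "\<lambda>x v. \<integral>\<^sup>+w. ennreal (gauss_density 0 t w) *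
    G (x, (s / t) *\<^sub>R (t *\<^sub>R x + \<sigma> *\<^sub>R w) + \<sigma> *\<^sub>R v, t *\<^sub>R x + \<sigma> *\<^sub>R w) \<partial>lborel"
  have "0 < t" using s by simp
  then have Y: "s *\<^sub>R x + \<sigma> *\<^sub>R (v + (s / t) *\<^sub>R w) = (s / t) *\<^sub>R (t *\<^sub>R x + \<sigma> *\<^sub>R w) + \<sigma> *\<^sub>R v"
    "t *\<^sub>R x + \<sigma> *\<^sub>R (v + (s / t) *\<^sub>R w + (w - (v + (s / t) *\<^sub>R w))) = t *\<^sub>R x + \<sigma> *\<^sub>R w"
    for x v w :: 'a
    by (simp_all add: algebra_simps)
  have "expect_incr s t (\<lambda>(x, z1, z2). G (x, s *\<^sub>R x + \<sigma> *\<^sub>R z1, t *\<^sub>R x + \<sigma> *\<^sub>R (z1 + z2)))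
      = (\<integral>\<^sup>+x. ennreal (f x) * (\<integral>\<^sup>+v. ennreal (gauss_density 0 ?r v) * ?G x v \<partial>lborel) \<partial>lborel)"
  proof (unfold expect_incr_def, rule nn_integral_cong, rule arg_cong2[where f="(*)"], rule refl)
    fix x :: 'a
    have "(\<lambda>(z1, z2). G (x, s *\<^sub>R x + \<sigma> *\<^sub>R z1, t *\<^sub>R x + \<sigma> *\<^sub>R (z1 + z2)))
        \<in> borel_measurable (borel \<Otimes>\<^sub>M borel)"
      by measurable
    from nn_integral_gauss_density_bridge[OF s this] show "(\<integral>\<^sup>+z1. ennreal (gauss_density 0 s z1) *
        (\<integral>\<^sup>+z2. ennreal (gauss_density 0 (t - s) z2) *
          (\<lambda>(x, z1, z2). G (x, s *\<^sub>R x + \<sigma> *\<^sub>R z1, t *\<^sub>R x + \<sigma> *\<^sub>R (z1 + z2))) (x, z1, z2) \<partial>lborel) \<partial>lborel)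
      = (\<integral>\<^sup>+v. ennreal (gauss_density 0 ?r v) * ?G x v \<partial>lborel)"
      by (simp add: Y)
  qed
  also have "\<dots> = (\<integral>\<^sup>+v. ennreal (gauss_density 0 ?r v) * (\<integral>\<^sup>+x. ennreal (f x) * ?G x v \<partial>lborel) \<partial>lborel)"
    by (rule nn_integral_lborel_swap) measurable
  finally show ?thesis
    by (simp add: expect_obs_def)
qed

lemma mmse_eq_add_expect_incr:
  assumes s: "0 < s" "s < t"
  shows "mmse s = mmse t + expect_incr s t (\<lambda>(x, z1, z2). ennreal ((norm
      (post_mean f \<sigma> t (t *\<^sub>R x + \<sigma> *\<^sub>R (z1 + z2)) - post_mean f \<sigma> s (s *\<^sub>R x + \<sigma> *\<^sub>R z1)))\<^sup>2))"
proof -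
  let ?r = "s * (t - s) / t"
  define c where "c v y = post_mean f \<sigma> s ((s / t) *\<^sub>R y + \<sigma> *\<^sub>R v)" for v y :: 'a
  have [measurable]: "c v \<in> borel_measurable borel" for v
    unfolding c_def by measurable
  have [measurable]: "(\<lambda>(v, y). c v y) \<in> borel_measurable (borel \<Otimes>\<^sub>M borel)"
    unfolding c_def by measurable
  have t: "0 < t" and r: "0 < ?r" using s by auto
  let ?excess = "\<lambda>v. expect_obs t (\<lambda>(x, y). ennreal ((norm (c v y - post_mean f \<sigma> t y))\<^sup>2))"
  have [measurable]: "?excess \<in> borel_measurable lborel"
    unfolding expect_obs_def by measurable
  have "mmse s = expect_incr s t (\<lambda>(x, z1, z2). ennreal ((norm (x - post_mean f \<sigma> s (s *\<^sub>R x + \<sigma> *\<^sub>R z1)))\<^sup>2))"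
    using expect_incr_eq_expect_obs[of s t "\<lambda>(x, y). ennreal ((norm (x - post_mean f \<sigma> s y))\<^sup>2)"] s
    by (simp add: mmse_def)
  also have "\<dots> = (\<integral>\<^sup>+v. ennreal (gauss_density 0 ?r v) *
      expect_obs t (\<lambda>(x, y). ennreal ((norm (x - c v y))\<^sup>2)) \<partial>lborel)"
    using expect_incr_bridge[OF s, of "\<lambda>(x, ys, yt). ennreal ((norm (x - post_mean f \<sigma> s ys))\<^sup>2)"]
    by (simp add: c_def)
  also have "\<dots> = (\<integral>\<^sup>+v. ennreal (gauss_density 0 ?r v) * mmse t + ennreal (gauss_density 0 ?r v) * ?excess v \<partial>lborel)"
    using t by (simp add: expect_obs_sq_error distrib_left)
  also have "\<dots> = mmse t + (\<integral>\<^sup>+v. ennreal (gauss_density 0 ?r v) * ?excess v \<partial>lborel)"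
    using r by (simp add: nn_integral_add nn_integral_multc nn_integral_gauss_density)
  also have "(\<integral>\<^sup>+v. ennreal (gauss_density 0 ?r v) * ?excess v \<partial>lborel) = expect_incr s t (\<lambda>(x, z1, z2). ennreal ((norm
      (post_mean f \<sigma> t (t *\<^sub>R x + \<sigma> *\<^sub>R (z1 + z2)) - post_mean f \<sigma> s (s *\<^sub>R x + \<sigma> *\<^sub>R z1)))\<^sup>2))"
    using expect_incr_bridge[OF s, of "\<lambda>(x, ys, yt). ennreal ((norm (post_mean f \<sigma> t yt - post_mean f \<sigma> s ys))\<^sup>2)"]
    by (simp add: c_def norm_minus_commute)
  finally show ?thesis .
qed

end

section \<open>Brownian observations\<close>

lemma product_nn_integral_triple:
  fixes M :: "nat \<Rightarrow> 'a measure"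
  assumes "product_sigma_finite M" and [measurable]: "H \<in> borel_measurable (M 0 \<Otimes>\<^sub>M M 1 \<Otimes>\<^sub>M M 2)"
  shows "(\<integral>\<^sup>+\<phi>. H (\<phi> 0, \<phi> 1, \<phi> 2) \<partial>(\<Pi>\<^sub>M i\<in>{0, 1, 2}. M i))
       = (\<integral>\<^sup>+x. \<integral>\<^sup>+y. \<integral>\<^sup>+z. H (x, y, z) \<partial>M 2 \<partial>M 1 \<partial>M 0)"
proof -
  interpret product_sigma_finite M by fact
  have "(\<integral>\<^sup>+\<phi>. H (\<phi> 0, \<phi> 1, \<phi> 2) \<partial>(\<Pi>\<^sub>M i\<in>{0, 1, 2}. M i))
      = (\<integral>\<^sup>+x. \<integral>\<^sup>+\<phi>. H ((\<phi>(0 := x)) 0, (\<phi>(0 := x)) 1, (\<phi>(0 := x)) 2) \<partial>(\<Pi>\<^sub>M i\<in>{1, 2}. M i) \<partial>M 0)"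
    by (rule product_nn_integral_insert_rev, simp, simp) measurable
  also have "\<dots> = (\<integral>\<^sup>+x. \<integral>\<^sup>+\<phi>. H (x, \<phi> 1, \<phi> 2) \<partial>(\<Pi>\<^sub>M i\<in>{1, 2}. M i) \<partial>M 0)"
    by simp
  also have "\<dots> = (\<integral>\<^sup>+x. \<integral>\<^sup>+y. \<integral>\<^sup>+\<phi>. H (x, (\<phi>(1 := y)) 1, (\<phi>(1 := y)) 2)
      \<partial>(\<Pi>\<^sub>M i\<in>{2}. M i) \<partial>M 1 \<partial>M 0)"
  proof (intro nn_integral_cong)
    fix x assume x: "x \<in> space (M 0)"
    show "(\<integral>\<^sup>+\<phi>. H (x, \<phi> 1, \<phi> 2) \<partial>(\<Pi>\<^sub>M i\<in>{1, 2}. M i))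
      = (\<integral>\<^sup>+y. \<integral>\<^sup>+\<phi>. H (x, (\<phi>(1 := y)) 1, (\<phi>(1 := y)) 2) \<partial>(\<Pi>\<^sub>M i\<in>{2}. M i) \<partial>M 1)"
      by (rule product_nn_integral_insert_rev, simp, simp) (insert x, measurable)
  qed
  also have "\<dots> = (\<integral>\<^sup>+x. \<integral>\<^sup>+y. \<integral>\<^sup>+\<phi>. H (x, y, \<phi> 2) \<partial>(\<Pi>\<^sub>M i\<in>{2}. M i) \<partial>M 1 \<partial>M 0)"
    by simp
  also have "\<dots> = (\<integral>\<^sup>+x. \<integral>\<^sup>+y. \<integral>\<^sup>+z. H (x, y, z) \<partial>M 2 \<partial>M 1 \<partial>M 0)"
  proof (intro nn_integral_cong)
    fix x y assume "x \<in> space (M 0)" "y \<in> space (M 1)"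
    then show "(\<integral>\<^sup>+\<phi>. H (x, y, \<phi> 2) \<partial>(\<Pi>\<^sub>M i\<in>{2}. M i)) = (\<integral>\<^sup>+z. H (x, y, z) \<partial>M 2)"
      by (intro product_nn_integral_singleton) measurable
  qed
  finally show ?thesis .
qed

lemma (in prob_space) nn_integral_indep_vars_3:
  fixes Z :: "nat \<Rightarrow> 'a \<Rightarrow> 'b::topological_space"
  assumes indep: "indep_vars (\<lambda>_. borel) Z {0..2}"
    and Z_measurable: "\<And>i. random_variable borel (Z i)"
    and [measurable]: "H \<in> borel_measurable (borel \<Otimes>\<^sub>M borel \<Otimes>\<^sub>M borel)"
  shows "(\<integral>\<^sup>+\<omega>. H (Z 0 \<omega>, Z 1 \<omega>, Z 2 \<omega>) \<partial>M) =
    (\<integral>\<^sup>+x. \<integral>\<^sup>+y. \<integral>\<^sup>+z. H (x, y, z) \<partial>distr M borel (Z 2) \<partial>distr M borel (Z 1) \<partial>distr M borel (Z 0))"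
proof -
  define N where "N i = distr M borel (Z i)" for i
  interpret N: product_sigma_finite N
    unfolding product_sigma_finite_def N_def
    using Z_measurable by (auto intro: prob_space_imp_sigma_finite prob_space_distr)
  define H' where "H' \<phi> = H (\<phi> 0, \<phi> 1, \<phi> (2::nat))" for \<phi> :: "nat \<Rightarrow> 'b"
  have [measurable]: "H' \<in> borel_measurable (\<Pi>\<^sub>M i\<in>{0, 1, 2}. borel)"
    unfolding H'_def by measurable
  have "{0..2::nat} = {0, 1, 2}" by auto
  with indep have distr_Z: "distr M (\<Pi>\<^sub>M i\<in>{0, 1, 2}. borel) (\<lambda>\<omega>. \<lambda>i\<in>{0, 1, 2}. Z i \<omega>) = (\<Pi>\<^sub>M i\<in>{0, 1, 2}. N i)"
    using indep_vars_iff_distr_eq_PiM'[where I="{0, 1, 2}" and M'="\<lambda>_. borel" and X=Z] Z_measurable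
    by (simp add: N_def)
  have "(\<integral>\<^sup>+\<omega>. H (Z 0 \<omega>, Z 1 \<omega>, Z 2 \<omega>) \<partial>M) = (\<integral>\<^sup>+\<omega>. H' (\<lambda>i\<in>{0, 1, 2}. Z i \<omega>) \<partial>M)"
    by (simp add: H'_def)
  also have "\<dots> = (\<integral>\<^sup>+\<phi>. H' \<phi> \<partial>distr M (\<Pi>\<^sub>M i\<in>{0, 1, 2}. borel) (\<lambda>\<omega>. \<lambda>i\<in>{0, 1, 2}. Z i \<omega>))"
  proof (rule nn_integral_distr[symmetric])
    show "(\<lambda>\<omega>. \<lambda>i\<in>{0, 1, 2}. Z i \<omega>) \<in> M \<rightarrow>\<^sub>M (\<Pi>\<^sub>M i\<in>{0, 1, 2}. borel)"
      using Z_measurable by (auto intro!: measurable_restrict)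
  qed measurable
  also have "\<dots> = (\<integral>\<^sup>+x. \<integral>\<^sup>+y. \<integral>\<^sup>+z. H (x, y, z) \<partial>N 2 \<partial>N 1 \<partial>N 0)"
    unfolding distr_Z H'_def
    by (rule product_nn_integral_triple[OF N.product_sigma_finite_axioms]) (simp add: N_def)
  finally show ?thesis
    unfolding N_def .
qed

locale observation_process = gaussian_channel f \<sigma> + prob_space M
  for f :: "'a::euclidean_space \<Rightarrow> real" and \<sigma> :: real and M :: "'w measure" +
  fixes X :: "'w \<Rightarrow> 'a" and B :: "real \<Rightarrow> 'w \<Rightarrow> 'a"
  assumes X_measurable[measurable]: "X \<in> borel_measurable M"
    and distr_X: "distr M borel X = density lborel f"
    and brownian: "std_BM_indep_of M X B"
begin

lemma measurable_B: "0 \<le> t \<Longrightarrow> B t \<in> borel_measurable M"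
  using brownian unfolding std_BM_indep_of_def by auto

lemma nn_integral_increments:
  assumes s: "0 < s" "s < t" and [measurable]: "H \<in> borel_measurable (borel \<Otimes>\<^sub>M borel \<Otimes>\<^sub>M borel)"
  shows "(\<integral>\<^sup>+\<omega>. H (X \<omega>, B s \<omega>, B t \<omega> - B s \<omega>) \<partial>M) = expect_incr s t H"
proof -
  have B_0: "\<And>\<omega>. \<omega> \<in> space M \<Longrightarrow> B 0 \<omega> = 0"
    and distr_incr: "\<And>a b. 0 \<le> a \<Longrightarrow> a < b \<Longrightarrow>
      distr M borel (\<lambda>\<omega>. B b \<omega> - B a \<omega>) = density lborel (gauss_density 0 (b - a))"
    and indep_incr: "\<And>n sq. sq 0 = 0 \<Longrightarrow> (\<forall>i<n. sq i < sq (Suc i)) \<Longrightarrow>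
      indep_vars (\<lambda>_. borel) (\<lambda>i \<omega>. if i = 0 then X \<omega> else B (sq i) \<omega> - B (sq (i - 1)) \<omega>) {0..n}"
    using brownian unfolding std_BM_indep_of_def by auto
  define sq where "sq i = (if i = 0 then 0 else if i = 1 then s else t)" for i :: nat
  define Z where "Z i \<omega> = (if i = 0 then X \<omega> else B (sq i) \<omega> - B (sq (i - 1)) \<omega>)" for i \<omega>
  have "indep_vars (\<lambda>_. borel) Z {0..2}"
    unfolding Z_def using s by (intro indep_incr) (auto simp: sq_def less_Suc_eq)
  moreover have "random_variable borel (Z i)" for i
  proof -
    have "0 \<le> sq j" for j using s by (simp add: sq_def)
    then show ?thesis
      unfolding Z_def using measurable_B by (cases "i = 0") auto
  qed
  moreover have "Z 0 = X" "Z 1 = (\<lambda>\<omega>. B s \<omega> - B 0 \<omega>)" "Z 2 = (\<lambda>\<omega>. B t \<omega> - B s \<omega>)"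
    by (simp_all add: Z_def sq_def fun_eq_iff)
  ultimately have "(\<integral>\<^sup>+\<omega>. H (X \<omega>, B s \<omega> - B 0 \<omega>, B t \<omega> - B s \<omega>) \<partial>M) =
      (\<integral>\<^sup>+x. \<integral>\<^sup>+y. \<integral>\<^sup>+z. H (x, y, z) \<partial>density lborel (gauss_density 0 (t - s))
        \<partial>density lborel (gauss_density 0 s) \<partial>density lborel f)"
    using nn_integral_indep_vars_3[of Z H] s by (simp add: distr_X distr_incr)
  also have "\<dots> = expect_incr s t H"
    unfolding expect_incr_def by (subst nn_integral_density, measurable)+
  finally show ?thesis
    using B_0 by (simp cong: nn_integral_cong)
qed

lemma mmse_eq_add_error:
  assumes s: "0 < s" "s < t"
  shows "mmse s = mmse t + (\<integral>\<^sup>+\<omega>. ennreal ((norm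
      (post_mean f \<sigma> t (Yproc X B \<sigma> t \<omega>) - post_mean f \<sigma> s (Yproc X B \<sigma> s \<omega>)))\<^sup>2) \<partial>M)"
  using nn_integral_increments[OF s, of "\<lambda>(x, z1, z2). ennreal ((norm
      (post_mean f \<sigma> t (t *\<^sub>R x + \<sigma> *\<^sub>R (z1 + z2)) - post_mean f \<sigma> s (s *\<^sub>R x + \<sigma> *\<^sub>R z1)))\<^sup>2)"]
  by (simp add: mmse_eq_add_expect_incr[OF s] Yproc_def)

lemma mmse_finite: "0 < t \<Longrightarrow> mmse t < \<infinity>"
  using mmse_le[of t] by (simp add: le_less_trans)

lemma mmse_antimono: "0 < s \<Longrightarrow> s \<le> t \<Longrightarrow> mmse t \<le> mmse s"
  using mmse_eq_add_error[of s t] by (cases "s = t") auto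

lemma Eerr_le_mmse_diff:
  assumes "0 < s" "s \<le> r" "r \<le> t"
  shows "Eerr M X B f \<sigma> s r \<le> enn2real (mmse s) - enn2real (mmse t)"
proof (cases "s = r")
  case True
  then show ?thesis
    using assms mmse_antimono[of s t] mmse_finite[of s] by (simp add: Eerr_def enn2real_mono)
next
  case False
  let ?err = "\<lambda>\<omega>. (norm (post_mean f \<sigma> r (Yproc X B \<sigma> r \<omega>) - post_mean f \<sigma> s (Yproc X B \<sigma> s \<omega>)))\<^sup>2"
  have [measurable]: "Yproc X B \<sigma> u \<in> borel_measurable M" if "0 \<le> u" for u
    using measurable_B[OF that] unfolding Yproc_def by measurable
  have "Eerr M X B f \<sigma> s r = enn2real (\<integral>\<^sup>+\<omega>. ennreal (?err \<omega>) \<partial>M)"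
    unfolding Eerr_def using assms by (intro integral_eq_nn_integral) auto
  also have "\<dots> = enn2real (mmse s) - enn2real (mmse r)"
    using mmse_eq_add_error[of s r] mmse_finite[of r] mmse_finite[of s] assms False
    by (simp add: enn2real_plus)
  also have "\<dots> \<le> enn2real (mmse s) - enn2real (mmse t)"
    using assms mmse_antimono[of r t] mmse_finite[of r] by (simp add: enn2real_mono)
  finally show ?thesis .
qed

lemma interval_integral_Eerr_le:
  assumes "0 < a" "a \<le> b"
  shows "(LBINT s=a..b. Eerr M X B f \<sigma> a s) \<le> (enn2real (mmse a) - enn2real (mmse b)) * (b - a)"
  using assms Eerr_le_mmse_diff[of a _ b] mmse_antimono[of a b] mmse_finite[of a]
  by (intro interval_integral_le_const) (auto simp: enn2real_mono)

end

section \<open>Summation by parts\<close>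

lemma abel_sum_le:
  fixes h m \<tau> :: "nat \<Rightarrow> real"
  assumes "\<And>k. k \<le> n \<Longrightarrow> 0 \<le> h k"
    and "\<And>k. k \<le> Suc n \<Longrightarrow> 0 \<le> m k" and "\<And>k. k \<le> Suc n \<Longrightarrow> m k \<le> D / \<tau> k"
  shows "(\<Sum>k\<le>n. h k * (m k - m (Suc k))) + h n * m (Suc n)
    \<le> D * (h 0 / \<tau> 0 + (\<Sum>k=1..n. max 0 (h k - h (k - 1)) * (1 / \<tau> k)))"
  using assms
proof (induction n)
  case 0
  then have "h 0 * m 0 \<le> h 0 * (D / \<tau> 0)"
    by (intro mult_left_mono) auto
  then show ?case
    by (simp add: algebra_simps)
next
  case (Suc n)
  have "(h (Suc n) - h n) * m (Suc n) \<le> D * (max 0 (h (Suc n) - h n) * (1 / \<tau> (Suc n)))"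
  proof (cases "h n \<le> h (Suc n)")
    case True
    then show ?thesis
      using mult_left_mono[of "m (Suc n)" "D / \<tau> (Suc n)" "h (Suc n) - h n"] Suc.prems by (simp add: mult_ac)
  next
    case False
    then show ?thesis
      using Suc.prems(2)[of "Suc n"] by (simp add: mult_nonpos_nonneg)
  qed
  with Suc show ?case
    by (simp add: algebra_simps)
qed

lemma sum_increments_le_C_disc:
  fixes m tt :: "nat \<Rightarrow> real"
  assumes "1 \<le> K" and "\<And>k. k < K \<Longrightarrow> tt k < tt (Suc k)"
    and "\<And>k. k \<le> K \<Longrightarrow> 0 \<le> m k" and "\<And>k. k \<le> K \<Longrightarrow> m k \<le> D / tt k"
  shows "(\<Sum>k<K. (tt (Suc k) - tt k) * (m k - m (Suc k))) \<le> D * C_disc tt K"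
proof -
  define h where "h k = tt (Suc k) - tt k" for k
  obtain n where K: "K = Suc n"
    using assms(1) by (cases K) auto
  have "(\<Sum>k<K. (tt (Suc k) - tt k) * (m k - m (Suc k))) \<le> (\<Sum>k\<le>n. h k * (m k - m (Suc k))) + h n * m (Suc n)"
    using assms(2)[of n] assms(3)[of K] by (simp add: K h_def lessThan_Suc_atMost)
  also have "\<dots> \<le> D * (h 0 / tt 0 + (\<Sum>k=1..n. max 0 (h k - h (k - 1)) * (1 / tt k)))"
  proof (rule abel_sum_le)
    show "0 \<le> h k" if "k \<le> n" for k
      using assms(2)[of k] that by (simp add: K h_def)
  qed (use assms(3,4) in \<open>simp_all add: K\<close>)
  also have "h 0 / tt 0 + (\<Sum>k=1..n. max 0 (h k - h (k - 1)) * (1 / tt k)) = C_disc tt K"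
    unfolding C_disc_def K h_def by (auto intro!: sum.cong)
  finally show ?thesis .
qed

theorem lemma9:
  fixes M :: "'w measure" and X :: "'w \<Rightarrow> 'a::euclidean_space" and B :: "real \<Rightarrow> 'w \<Rightarrow> 'a"
    and f :: "'a \<Rightarrow> real" and \<sigma> :: real and K :: nat and tt :: "nat \<Rightarrow> real"
  assumes "prob_space M"
    and "f \<in> borel_measurable borel" and "\<And>x. f x \<ge> 0"
    and "prob_space (density lborel f)"
    and "integrable (density lborel f) (\<lambda>x. (norm x)\<^sup>2)"
    and "X \<in> borel_measurable M"
    and "distr M borel X = density lborel f"
    and "std_BM_indep_of M X B"
    and "\<sigma> > 0"
    and "K \<ge> 1"
    and "tt 0 > 0" and "\<And>k. k < K \<Longrightarrow> tt k < tt (Suc k)"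
  shows "(\<Sum>k<K. (LBINT s=tt k..tt (Suc k). Eerr M X B f \<sigma> (tt k) s))
           \<le> real DIM('a) * \<sigma>\<^sup>2 * C_disc tt K"
proof -
  interpret observation_process f \<sigma> M X B
    by (intro observation_process.intro gaussian_channel.intro observation_process_axioms.intro)
      (use assms in auto)
  define m where "m k = enn2real (mmse (tt k))" for k
  have tt_pos: "0 < tt k" if "k \<le> K" for k
    using that
  proof (induction k)
    case (Suc k)
    then show ?case using assms(12)[of k] by simp
  qed (use assms(11) in simp)
  have "(\<Sum>k<K. (LBINT s=tt k..tt (Suc k). Eerr M X B f \<sigma> (tt k) s))
      \<le> (\<Sum>k<K. (tt (Suc k) - tt k) * (m k - m (Suc k)))"
    using tt_pos assms(12) interval_integral_Eerr_le
    by (intro sum_mono) (simp add: m_def mult.commute less_imp_le)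
  also have "\<dots> \<le> real DIM('a) * \<sigma>\<^sup>2 * C_disc tt K"
  proof (rule sum_increments_le_C_disc)
    show "m k \<le> real DIM('a) * \<sigma>\<^sup>2 / tt k" if "k \<le> K" for k
      using mmse_le[OF tt_pos[OF that]] tt_pos[OF that] unfolding m_def
      by (simp add: enn2real_leI)
  qed (use assms(10,12) in \<open>auto simp: m_def\<close>)
  finally show ?thesis .
qed

end
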